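(* In the Simon urn described in the context, with fixed trigger probability $p\in(0,1)$, for all integers $n\ge c\ge1$, $$\mathbb E[K_{n,c}]=\frac{\Gamma(n-p+1)}{\Gamma(n)}\left(\frac{p^{c-1}}{(1-p)^c}\sum_{i=c+1}^{n}\binom{i-2}{c-2}\frac{(1-p)^i\,\Gamma(i)}{\Gamma(i-p+1)}+\frac{p^{c-1}\,\Gamma(c)}{\Gamma(c-p+1)}\right),$$ where $\Gamma$ is the gamma function, an empty sum is $0$, and $\binom{i-2}{-1}=0$.
   Context: Simon urn. The urn is empty at time $0$. Let $B_0=1$ and let $(B_n)_{n\ge1}$ be i.i.d. Bernoulli random variables with $\Pr(B_n=1)=p\in(0,1)$, independent of everything else. Colors are labelled $1,2,\dots$ in order of first appearance. At each time $n\ge1$: if $B_{n-1}=1$, one ball of a new color (not yet present) is added to the urn and this color is registered; if $B_{n-1}=0$, a ball is drawn uniformly at random from the urn, its color is registered, and one additional ball of that color is added. Thus the urn contains $n$ balls at time $n$. $K_{n,c}$ denotes the number of times color $c$ has been registered up to and including time $n$ (equal to the number of balls of color $c$ at time $n$), and $K_{n,c}=0$ if color $c$ has not yet appeared. *)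

theory Defs
  imports "HOL-Probability.Probability"
begin

text \<open>State of the Simon urn at time n: the list of the colours of the n balls,
  in order of insertion.  Colours are labelled 1,2,... in order of first appearance,
  so a new colour gets label (number of colours present) + 1.
  The step from time n to time n+1 uses the trigger B_n, where B_0 = 1 and
  B_n ~ Bernoulli(p) for n >= 1, independent of everything else.\<close>

fun simon_urn :: "real \<Rightarrow> nat \<Rightarrow> nat list pmf" where
  "simon_urn p 0 = return_pmf []"
| "simon_urn p (Suc n) =
     simon_urn p n \<bind> (\<lambda>bs.
       (if n = 0 then return_pmf True else bernoulli_pmf p) \<bind> (\<lambda>b.
         if b then return_pmf (bs @ [card (set bs) + 1])
         else map_pmf (\<lambda>i. bs @ [bs ! i]) (pmf_of_set {..<length bs})))"

definition K :: "nat list \<Rightarrow> nat \<Rightarrow> nat" where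
  "K bs c = length (filter (\<lambda>x. x = c) bs)"

end

(*
  Conditioning on the urn at time n >= 1, each present ball of colour c is copied with
  probability (1 - p)/n, and colour c is created with probability p P(C_n = c - 1), where the
  number of colours C_n is 1 + Binomial(n - 1, p). Hence a_n = E K_{n,c} satisfies
    a_{n+1} = (1 + (1 - p)/n) a_n + p P(C_n = c - 1),
  whose homogeneous solution is Gamma(n - p + 1)/Gamma(n). Variation of constants from
  a_c = p^(c-1) gives the formula.
*)
theory Submission
  imports Defs
begin

lemma expectation_bind_pmf_finite:
  fixes h :: "'b \<Rightarrow> 'c::{banach, second_countable_topology}"
  assumes "finite (set_pmf M)" "\<And>x. x \<in> set_pmf M \<Longrightarrow> finite (set_pmf (f x))"
  shows "measure_pmf.expectation (M \<bind> f) h =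
         measure_pmf.expectation M (\<lambda>x. measure_pmf.expectation (f x) h)"
  using assms by (simp add: pmf_expectation_bind[of "set_pmf M"] integral_measure_pmf[of "set_pmf M"])

definition urn_step :: "real \<Rightarrow> nat list \<Rightarrow> nat list pmf" where
  "urn_step p bs = bernoulli_pmf p \<bind> (\<lambda>b.
     if b then return_pmf (bs @ [card (set bs) + 1])
     else map_pmf (\<lambda>i. bs @ [bs ! i]) (pmf_of_set {..<length bs}))"

lemma simon_urn_Suc_0: "simon_urn p (Suc 0) = return_pmf [1]"
  by (simp add: bind_return_pmf)

lemma simon_urn_Suc: "n \<noteq> 0 \<Longrightarrow> simon_urn p (Suc n) = simon_urn p n \<bind> urn_step p"
  by (simp add: urn_step_def[abs_def])

declare simon_urn.simps(2) [simp del]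

lemma set_pmf_urn_step:
  assumes "bs \<noteq> []"
  shows "set_pmf (urn_step p bs) \<subseteq> insert (bs @ [card (set bs) + 1]) ((\<lambda>x. bs @ [x]) ` set bs)"
proof -
  have "set_pmf (pmf_of_set {..<length bs}) = {..<length bs}"
    using assms by (intro set_pmf_of_set) auto
  then show ?thesis by (auto simp: urn_step_def split: if_splits)
qed

lemma finite_set_pmf_urn_step: "bs \<noteq> [] \<Longrightarrow> finite (set_pmf (urn_step p bs))"
  by (rule finite_subset[OF set_pmf_urn_step]) auto

lemma expectation_urn_step:
  fixes F :: "nat list \<Rightarrow> real"
  assumes "0 \<le> p" "p \<le> 1" "bs \<noteq> []"
  shows "measure_pmf.expectation (urn_step p bs) F =
    p * F (bs @ [card (set bs) + 1]) + (1 - p) * (\<Sum>i<length bs. F (bs @ [bs ! i])) / length bs"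
proof -
  have "set_pmf (pmf_of_set {..<length bs}) = {..<length bs}"
    using assms by (intro set_pmf_of_set) auto
  then have "measure_pmf.expectation (urn_step p bs) F =
      (\<Sum>b\<in>UNIV. pmf (bernoulli_pmf p) b * measure_pmf.expectation
         (if b then return_pmf (bs @ [card (set bs) + 1])
          else map_pmf (\<lambda>i. bs @ [bs ! i]) (pmf_of_set {..<length bs})) F)"
    unfolding urn_step_def by (subst pmf_expectation_bind[of UNIV]) auto
  moreover have "measure_pmf.expectation (pmf_of_set {..<length bs}) (\<lambda>i. F (bs @ [bs ! i])) =
      (\<Sum>i<length bs. F (bs @ [bs ! i])) / length bs"
    using assms by (subst integral_pmf_of_set) auto
  ultimately show ?thesis
    using assms by (simp add: UNIV_bool)
qed

lemma set_pmf_simon_urn: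
  assumes "bs \<in> set_pmf (simon_urn p n)"
  shows "length bs = n \<and> (\<exists>k. set bs = {1..k})"
  using assms
proof (induction n arbitrary: bs)
  case 0
  then show ?case by (auto intro: exI[of _ 0])
next
  case (Suc n)
  show ?case
  proof (cases "n = 0")
    case True
    then show ?thesis using Suc.prems by (auto simp: simon_urn_Suc_0)
  next
    case False
    from Suc.prems obtain bs0 where bs0: "bs0 \<in> set_pmf (simon_urn p n)"
      and bs: "bs \<in> set_pmf (urn_step p bs0)"
      unfolding simon_urn_Suc[OF False] by auto
    obtain k where len0: "length bs0 = n" and k: "set bs0 = {1..k}"
      using Suc.IH[OF bs0] by blast
    with False have "bs0 \<noteq> []" by auto
    with bs consider "bs = bs0 @ [card (set bs0) + 1]" | x where "x \<in> set bs0" "bs = bs0 @ [x]"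
      using set_pmf_urn_step by blast
    then show ?thesis
    proof cases
      case 1
      then show ?thesis using len0 k by (auto simp: atLeastAtMostSuc_conv intro!: exI[of _ "k + 1"])
    next
      case 2
      then show ?thesis using len0 k by (auto simp: insert_absorb)
    qed
  qed
qed

lemma finite_set_pmf_simon_urn: "finite (set_pmf (simon_urn p n))"
proof (rule finite_subset)
  show "set_pmf (simon_urn p n) \<subseteq> {bs. set bs \<subseteq> {..n} \<and> length bs = n}"
  proof
    fix bs assume bs: "bs \<in> set_pmf (simon_urn p n)"
    then obtain k where k: "set bs = {1..k}" and len: "length bs = n"
      using set_pmf_simon_urn by blast
    have "k \<le> n" using card_length[of bs] k len by simp
    then show "bs \<in> {bs. set bs \<subseteq> {..n} \<and> length bs = n}" using k len by auto
  qed
qed (simp add: finite_lists_length_eq)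

lemma map_pmf_num_colours_urn_step:
  assumes "0 \<le> p" "p \<le> 1" "bs \<noteq> []" "set bs = {1..k}"
  shows "map_pmf (\<lambda>bs. card (set bs)) (urn_step p bs) =
    map_pmf (\<lambda>b. card (set bs) + of_bool b) (bernoulli_pmf p)"
proof -
  have "Suc (card (set bs)) \<notin> set bs"
    using assms(4) by simp
  then have new: "card (insert (Suc (card (set bs))) (set bs)) = Suc (card (set bs))"
    by simp
  have old: "map_pmf (\<lambda>bs. card (set bs)) (map_pmf (\<lambda>i. bs @ [bs ! i]) (pmf_of_set {..<length bs}))
      = return_pmf (card (set bs))"
  proof -
    have "set_pmf (pmf_of_set {..<length bs}) = {..<length bs}"
      using assms by (intro set_pmf_of_set) auto
    then have "map_pmf (\<lambda>i. card (set (bs @ [bs ! i]))) (pmf_of_set {..<length bs}) =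
        map_pmf (\<lambda>_. card (set bs)) (pmf_of_set {..<length bs})"
      by (intro map_pmf_cong) (auto simp: insert_absorb)
    then show ?thesis by (simp add: pmf.map_comp o_def)
  qed
  show ?thesis
    unfolding urn_step_def map_bind_pmf map_pmf_def[of _ "bernoulli_pmf p"]
    by (intro bind_pmf_cong) (simp_all add: new old)
qed

lemma map_pmf_num_colours_simon_urn:
  assumes "0 \<le> p" "p \<le> 1"
  shows "map_pmf (\<lambda>bs. card (set bs)) (simon_urn p (Suc m)) = map_pmf Suc (binomial_pmf m p)"
proof (induction m)
  case 0
  then show ?case using assms unfolding simon_urn_Suc_0 by (simp add: binomial_pmf_0)
next
  case (Suc m)
  let ?colours = "\<lambda>bs. card (set bs)"
  have "map_pmf ?colours (simon_urn p (Suc (Suc m))) =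
      simon_urn p (Suc m) \<bind> (\<lambda>bs. map_pmf (\<lambda>b. ?colours bs + of_bool b) (bernoulli_pmf p))"
    unfolding simon_urn_Suc[OF Suc_not_Zero] map_bind_pmf
  proof (intro bind_pmf_cong refl)
    fix bs assume "bs \<in> set_pmf (simon_urn p (Suc m))"
    then obtain k where "length bs = Suc m" "set bs = {1..k}"
      using set_pmf_simon_urn by blast
    with assms show "map_pmf ?colours (urn_step p bs) =
        map_pmf (\<lambda>b. ?colours bs + of_bool b) (bernoulli_pmf p)"
      by (intro map_pmf_num_colours_urn_step) auto
  qed
  also have "\<dots> = map_pmf Suc (binomial_pmf m p) \<bind>
      (\<lambda>k. map_pmf (\<lambda>b. k + of_bool b) (bernoulli_pmf p))"
    unfolding Suc.IH[symmetric] bind_map_pmf ..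
  also have "\<dots> = binomial_pmf m p \<bind> (\<lambda>k. bernoulli_pmf p \<bind> (\<lambda>b. return_pmf (Suc (k + of_bool b))))"
    unfolding bind_map_pmf by (simp add: map_pmf_def)
  also have "\<dots> = bernoulli_pmf p \<bind> (\<lambda>b. binomial_pmf m p \<bind> (\<lambda>k. return_pmf (Suc (k + of_bool b))))"
    by (rule bind_commute_pmf)
  also have "\<dots> = map_pmf Suc (binomial_pmf (Suc m) p)"
    using assms by (simp add: binomial_pmf_Suc map_bind_pmf of_bool_def add.commute)
  finally show ?case .
qed

lemma prob_num_colours_simon_urn:
  assumes "0 \<le> p" "p \<le> 1"
  shows "measure_pmf.prob (simon_urn p (Suc m)) {bs. card (set bs) = k} =
    (if k = 0 then 0 else real (m choose (k - 1)) * p ^ (k - 1) * (1 - p) ^ (m - (k - 1)))"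
proof -
  have "measure_pmf.prob (simon_urn p (Suc m)) {bs. card (set bs) = k} =
      pmf (map_pmf Suc (binomial_pmf m p)) k"
    by (simp add: map_pmf_num_colours_simon_urn[OF assms, symmetric] pmf_map vimage_def)
  also have "\<dots> = (if k = 0 then 0 else pmf (binomial_pmf m p) (k - 1))"
    by (cases k) (auto simp: pmf_map_inj' pmf_eq_0_set_pmf)
  finally show ?thesis using assms by simp
qed

lemma K_snoc: "K (bs @ [x]) c = K bs c + of_bool (x = c)"
  by (simp add: K_def)

lemma K_eq_0_iff: "K bs c = 0 \<longleftrightarrow> c \<notin> set bs"
  by (auto simp: K_def filter_empty_conv)

lemma sum_K_snoc_nth: "(\<Sum>i<length bs. K (bs @ [bs ! i]) c) = (length bs + 1) * K bs c"
proof -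
  have "(\<Sum>i<length bs. of_bool (bs ! i = c)) = card {i. i < length bs \<and> bs ! i = c}"
    by (simp add: Collect_conj_eq lessThan_def Int_commute)
  also have "\<dots> = K bs c"
    by (simp add: K_def length_filter_conv_card)
  finally show ?thesis by (simp add: K_snoc sum.distrib)
qed

definition expected_K :: "real \<Rightarrow> nat \<Rightarrow> nat \<Rightarrow> real" where
  "expected_K p n c = measure_pmf.expectation (simon_urn p n) (\<lambda>bs. real (K bs c))"

lemma expected_K_eq_0:
  assumes "n < c"
  shows "expected_K p n c = 0"
proof -
  have "K bs c = 0" if bs: "bs \<in> set_pmf (simon_urn p n)" for bs
  proof -
    obtain k where k: "set bs = {1..k}" and len: "length bs = n"
      using set_pmf_simon_urn[OF bs] by blast
    have "k \<le> n" using card_length[of bs] k len by simp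
    with assms k show ?thesis by (simp add: K_eq_0_iff)
  qed
  then have "expected_K p n c = measure_pmf.expectation (simon_urn p n) (\<lambda>_. 0)"
    unfolding expected_K_def by (intro integral_cong_AE) (simp_all add: AE_measure_pmf_iff)
  then show ?thesis by simp
qed

lemma expected_K_Suc:
  assumes "0 \<le> p" "p \<le> 1" "n \<noteq> 0" "c \<noteq> 0"
  shows "expected_K p (Suc n) c = (1 + (1 - p) / n) * expected_K p n c +
    p * measure_pmf.prob (simon_urn p n) {bs. card (set bs) = c - 1}"
proof -
  let ?new_colour = "\<lambda>bs. indicator {bs. card (set bs) = c - 1} bs :: real"
  have step: "measure_pmf.expectation (urn_step p bs) (\<lambda>bs. real (K bs c)) =
      (1 + (1 - p) / n) * K bs c + p * ?new_colour bs"
    if "bs \<in> set_pmf (simon_urn p n)" for bs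
  proof -
    have len: "length bs = n" using set_pmf_simon_urn[OF that] by blast
    have "real (\<Sum>i<length bs. K (bs @ [bs ! i]) c) = real ((length bs + 1) * K bs c)"
      by (simp only: sum_K_snoc_nth)
    then have "(\<Sum>i<n. real (K (bs @ [bs ! i]) c)) = (n + 1) * K bs c"
      using len by simp
    then show ?thesis
      using assms len by (auto simp: expectation_urn_step K_snoc field_simps indicator_def)
  qed
  have nonempty: "bs \<noteq> []" if "bs \<in> set_pmf (simon_urn p n)" for bs
    using set_pmf_simon_urn[OF that] assms(3) by auto
  have "expected_K p (Suc n) c = measure_pmf.expectation (simon_urn p n)
      (\<lambda>bs. measure_pmf.expectation (urn_step p bs) (\<lambda>bs. real (K bs c)))"
    unfolding expected_K_def simon_urn_Suc[OF assms(3)]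
    by (intro expectation_bind_pmf_finite finite_set_pmf_simon_urn finite_set_pmf_urn_step nonempty)
  also have "\<dots> = measure_pmf.expectation (simon_urn p n)
      (\<lambda>bs. (1 + (1 - p) / n) * K bs c + p * ?new_colour bs)"
    by (intro integral_cong_AE) (simp_all add: AE_measure_pmf_iff step)
  also have "\<dots> = (1 + (1 - p) / n) * expected_K p n c +
      p * measure_pmf.prob (simon_urn p n) {bs. card (set bs) = c - 1}"
    unfolding expected_K_def
    by (simp add: integrable_measure_pmf_finite[OF finite_set_pmf_simon_urn])
  finally show ?thesis .
qed

lemma expected_K_diagonal:
  assumes "0 \<le> p" "p \<le> 1" "c \<noteq> 0"
  shows "expected_K p c c = p ^ (c - 1)"
proof (cases c)
  case (Suc d)
  show ?thesis
  proof (cases d)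
    case 0
    with Suc have "c = Suc 0" by simp
    then show ?thesis
      by (simp add: expected_K_def simon_urn_Suc_0 K_def)
  next
    case (Suc e)
    have "expected_K p c c = (1 + (1 - p) / d) * expected_K p d c +
        p * measure_pmf.prob (simon_urn p d) {bs. card (set bs) = d}"
      using assms \<open>c = Suc d\<close> Suc by (simp add: expected_K_Suc)
    moreover have "measure_pmf.prob (simon_urn p d) {bs. card (set bs) = d} = p ^ e"
      using assms Suc by (simp add: prob_num_colours_simon_urn)
    ultimately show ?thesis
      using \<open>c = Suc d\<close> Suc by (simp add: expected_K_eq_0)
  qed
qed (use assms in simp)

lemma linear_recurrence_closed_form:
  fixes a b r P :: "nat \<Rightarrow> real"
  assumes a_Suc: "\<And>m. k \<le> m \<Longrightarrow> a (Suc m) = r m * a m + b m"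
    and P_Suc: "\<And>m. k \<le> m \<Longrightarrow> P (Suc m) = r m * P m"
    and P_nonzero: "\<And>m. k \<le> m \<Longrightarrow> P m \<noteq> 0"
    and "k \<le> n"
  shows "a n = P n * (a k / P k + (\<Sum>i = k + 1..n. b (i - 1) / P i))"
  using \<open>k \<le> n\<close>
proof (induction n rule: dec_induct)
  case base
  then show ?case using P_nonzero by simp
next
  case (step m)
  have "P (Suc m) \<noteq> 0" using P_nonzero step.hyps by simp
  then have "a (Suc m) = P (Suc m) * (a k / P k + (\<Sum>i = k + 1..m. b (i - 1) / P i)) +
      P (Suc m) * (b m / P (Suc m))"
    using step a_Suc P_Suc by (simp add: algebra_simps)
  then show ?case
    using step.hyps by (simp add: algebra_simps)
qed

lemma Gamma_plus1_pos:
  fixes x :: real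
  assumes "0 < x"
  shows "Gamma (x + 1) = x * Gamma x"
  using assms by (intro Gamma_plus1) (auto elim: nonpos_Ints_cases)

definition Gamma_factor :: "real \<Rightarrow> nat \<Rightarrow> real" where
  "Gamma_factor p m = Gamma (real m - p + 1) / Gamma (real m)"

lemma Gamma_factor_pos: "0 < m \<Longrightarrow> p < 1 \<Longrightarrow> 0 < Gamma_factor p m"
  by (simp add: Gamma_factor_def Gamma_real_pos)

lemma Gamma_factor_Suc:
  assumes "0 < m" "p < 1"
  shows "Gamma_factor p (Suc m) = (1 + (1 - p) / m) * Gamma_factor p m"
proof -
  have "Gamma (real m + 1 - p + 1) = (real m - p + 1) * Gamma (real m - p + 1)"
    using Gamma_plus1_pos[of "real m - p + 1"] assms by (simp add: algebra_simps)
  moreover have "Gamma (real m + 1) = real m * Gamma (real m)"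
    using Gamma_plus1_pos assms by simp
  ultimately show ?thesis
    using assms Gamma_real_pos[of "real m"] by (simp add: Gamma_factor_def field_simps)
qed

lemma new_colour_prob_simon_urn:
  assumes "0 \<le> p" "p < 1" "1 \<le> c" "c < i"
  shows "p * measure_pmf.prob (simon_urn p (i - 1)) {bs. card (set bs) = c - 1} =
    p ^ (c - 1) / (1 - p) ^ c * ((if c < 2 then 0 else real ((i - 2) choose (c - 2))) * (1 - p) ^ i)"
proof -
  have i: "i - 1 = Suc (i - 2)" using assms by simp
  show ?thesis
  proof (cases "c < 2")
    case True
    then show ?thesis
      using assms unfolding i by (subst prob_num_colours_simon_urn) simp_all
  next
    case False
    define d j where "d = c - 2" and "j = i - 2"
    with False assms have c: "c = d + 2" and i: "i = j + 2" and "d < j"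
      by auto
    define q where "q = 1 - p"
    have "q ^ (d + 2) \<noteq> 0" using assms by (simp add: q_def)
    moreover have "q ^ (j + 2) = q ^ (d + 2) * q ^ (j - d)"
      using \<open>d < j\<close> by (simp flip: power_add)
    ultimately have "p * ((j choose d) * p ^ d * q ^ (j - d)) =
        p ^ Suc d / q ^ (d + 2) * ((j choose d) * q ^ (j + 2))"
      by (simp add: field_simps)
    then show ?thesis
      using assms by (simp add: c i q_def prob_num_colours_simon_urn)
  qed
qed

theorem lemma4p2:
  fixes p :: real and n c :: nat
  assumes "0 < p" "p < 1" "1 \<le> c" "c \<le> n"
  shows "measure_pmf.expectation (simon_urn p n) (\<lambda>bs. real (K bs c)) =
    Gamma (real n - p + 1) / Gamma (real n) *
      (p ^ (c - 1) / (1 - p) ^ c *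
         (\<Sum>i = c + 1..n. (if c < 2 then 0 else real ((i - 2) choose (c - 2))) *
             (1 - p) ^ i * Gamma (real i) / Gamma (real i - p + 1))
       + p ^ (c - 1) * Gamma (real c) / Gamma (real c - p + 1))"
proof -
  define birth where "birth m = p * measure_pmf.prob (simon_urn p m) {bs. card (set bs) = c - 1}"
    for m :: nat
  have "expected_K p n c = Gamma_factor p n *
      (expected_K p c c / Gamma_factor p c + (\<Sum>i = c + 1..n. birth (i - 1) / Gamma_factor p i))"
    using assms
    by (intro linear_recurrence_closed_form[where r = "\<lambda>m. 1 + (1 - p) / m"])
       (auto simp: expected_K_Suc birth_def Gamma_factor_Suc
          Gamma_factor_pos[THEN less_imp_neq, THEN not_sym])
  also have "expected_K p c c / Gamma_factor p c = p ^ (c - 1) * Gamma (real c) / Gamma (real c - p + 1)"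
    using assms by (simp add: expected_K_diagonal Gamma_factor_def)
  also have "(\<Sum>i = c + 1..n. birth (i - 1) / Gamma_factor p i) = p ^ (c - 1) / (1 - p) ^ c *
      (\<Sum>i = c + 1..n. (if c < 2 then 0 else real ((i - 2) choose (c - 2))) *
          (1 - p) ^ i * Gamma (real i) / Gamma (real i - p + 1))"
    unfolding sum_distrib_left birth_def
    by (intro sum.cong refl, subst new_colour_prob_simon_urn) (use assms in \<open>auto simp: Gamma_factor_def\<close>)
  finally show ?thesis
    by (simp add: expected_K_def Gamma_factor_def)
qed

end
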